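(* Let $1<p<\infty$ and $s\in(0,1]$. There is a constant $C$ depending only on $N,p,s$ such that for every locally integrable $f$ on $\mathbb R^N$, $$\Big\|\frac{f(x)-f(y)}{|x-y|^{\frac Np+s}}\Big\|_{L(p,\infty)(\mathbb R^N\times\mathbb R^N)}\le C\,\|f_s^\#\|_{L^p(\mathbb R^N)}.$$ That is, $C^s_p(\mathbb R^N)\subset BSY^s_p(\mathbb R^N)$.
   Context: For a measurable function $F$ on a measure space $(Y,\nu)$, $\|F\|_{L(p,\infty)(Y,\nu)}=\sup_{\lambda>0}\lambda\,\nu(\{|F|>\lambda\})^{1/p}$; $\mathbb R^N\times\mathbb R^N$ carries Lebesgue measure $\mathcal L^{2N}$. The sharp fractional maximal function is $f_s^\#(x)=\sup_{r>0}\frac{1}{r^{s+N}}\int_{B(x,r)}|f(y)-(f)_{B(x,r)}|\,dy$, with $(f)_{B}$ the Lebesgue average of $f$ over the ball $B$. $\|f\|_{C^s_p}:=\|f_s^\#\|_{L^p}$ and $\|f\|_{BSY^s_p}$ is the left-hand side above. *)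

theory Defs
  imports "HOL-Analysis.Analysis"
begin

definition enn_powr :: "ennreal \<Rightarrow> real \<Rightarrow> ennreal" where
  "enn_powr a q = (if a = top then top else ennreal (enn2real a powr q))"

definition locally_integrable :: "('a::euclidean_space \<Rightarrow> real) \<Rightarrow> bool" where
  "locally_integrable f \<longleftrightarrow> (\<forall>K. compact K \<longrightarrow> set_integrable lebesgue K f)"

definition ball_avg :: "('a::euclidean_space \<Rightarrow> real) \<Rightarrow> 'a \<Rightarrow> real \<Rightarrow> real" where
  "ball_avg f x r = (LINT y:ball x r|lebesgue. f y) / measure lebesgue (ball x r)"

definition sharp_max :: "real \<Rightarrow> ('a::euclidean_space \<Rightarrow> real) \<Rightarrow> 'a \<Rightarrow> ennreal" where
  "sharp_max s f x = (SUP r\<in>{0<..}. ennreal (1 / r powr (s + real DIM('a))) *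
      (\<integral>\<^sup>+ y\<in>ball x r. ennreal \<bar>f y - ball_avg f x r\<bar> \<partial>lebesgue))"

definition Lp_norm :: "real \<Rightarrow> 'a measure \<Rightarrow> ('a \<Rightarrow> ennreal) \<Rightarrow> ennreal" where
  "Lp_norm p M g = enn_powr (\<integral>\<^sup>+ x. enn_powr (g x) p \<partial>M) (1 / p)"

definition weak_Lp_norm :: "real \<Rightarrow> 'a measure \<Rightarrow> ('a \<Rightarrow> real) \<Rightarrow> ennreal" where
  "weak_Lp_norm p M F = (SUP t\<in>{0<..}. ennreal t *
      enn_powr (emeasure M {z \<in> space M. \<bar>F z\<bar> > t}) (1 / p))"

end

theory Submission
  imports Defs
begin

text \<open>Let g x be the supremum of the normalized mean oscillations
  r^-(s+N) * (integral of |f - f_B| over B = B(x,r)) over the dyadic radii r = 2^k only, so that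
  g <= f_s^#. Where g x is finite, consecutive dyadic ball averages of f at x differ by
  O(g x * 2^(k s)), so they converge to a value L x, and L = f almost everywhere. Comparing
  averages over nested balls of radius comparable to |x - y| gives the pointwise Hoelder bound
  |L x - L y| <= C (g x + g y) |x - y|^s. Hence, up to a null set, the level set
  {(x, y). |f x - f y| / |x - y|^(N/p + s) > t} lies in {|x - y| < R x} union {|x - y| < R y}
  with R x = (2 C g x / t)^(p/N), and Fubini bounds its measure by 2 omega_N (2 C / t)^p times
  the integral of g^p.\<close>

lemma telescoping_geometric:
  fixes b :: "nat \<Rightarrow> real"
  assumes step: "\<And>n. \<bar>b (Suc n) - b n\<bar> \<le> A * q ^ n" and q: "0 \<le> q" "q < 1"
  shows "b \<longlonglongrightarrow> b 0 + (\<Sum>n. b (Suc n) - b n)"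
    and "\<bar>\<Sum>n. b (Suc n) - b n\<bar> \<le> A / (1 - q)"
proof -
  have geometric: "summable (\<lambda>n. A * q ^ n)"
    using q by (intro summable_mult summable_geometric) auto
  have abs_summable: "summable (\<lambda>n. \<bar>b (Suc n) - b n\<bar>)"
    by (rule summable_comparison_test'[OF geometric]) (use step in auto)
  have "(\<lambda>n. b 0 + (\<Sum>i<n. b (Suc i) - b i)) \<longlonglongrightarrow> b 0 + (\<Sum>n. b (Suc n) - b n)"
    by (intro tendsto_add tendsto_const summable_LIMSEQ summable_rabs_cancel[OF abs_summable])
  then show "b \<longlonglongrightarrow> b 0 + (\<Sum>n. b (Suc n) - b n)"
    by (simp add: sum_lessThan_telescope)
  have "\<bar>\<Sum>n. b (Suc n) - b n\<bar> \<le> (\<Sum>n. \<bar>b (Suc n) - b n\<bar>)"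
    by (rule summable_rabs[OF abs_summable])
  also have "\<dots> \<le> (\<Sum>n. A * q ^ n)"
    by (rule suminf_le[OF step abs_summable geometric])
  also have "\<dots> = A / (1 - q)"
    using q by (simp add: suminf_mult suminf_geometric)
  finally show "\<bar>\<Sum>n. b (Suc n) - b n\<bar> \<le> A / (1 - q)" .
qed

lemma tendsto_dyadic_powr:
  assumes "0 < s"
  shows "(\<lambda>m. C * (2 powr (- real m)) powr s) \<longlonglongrightarrow> 0"
proof -
  have "(\<lambda>m. (2 powr (- s)) ^ m) \<longlonglongrightarrow> 0"
    using assms powr_less_mono[of "- s" 0 2] by (intro LIMSEQ_power_zero) auto
  moreover have "(2 powr (- real m)) powr s = (2 powr (- s)) ^ m" for m
    by (simp add: powr_power powr_powr)
  ultimately show ?thesis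
    using tendsto_mult_right_zero by auto
qed

lemma powr_divide_power_cancel:
  fixes a p :: real
  assumes "0 \<le> a" "0 < n"
  shows "(a powr (p / real n)) ^ n = a powr p"
  using assms by (cases "a = 0") (simp_all add: powr_power)

lemma set_integral_mono_set:
  fixes g :: "'a \<Rightarrow> real"
  assumes "A \<subseteq> B" "A \<in> sets M" "set_integrable M B g" "\<And>y. 0 \<le> g y"
  shows "(LINT y:A|M. g y) \<le> (LINT y:B|M. g y)"
  using set_integrable_subset[OF assms(3,2,1)] assms(3)
  unfolding set_integrable_def set_lebesgue_integral_def
  by (intro integral_mono) (use assms(1,4) in \<open>auto simp: indicator_def\<close>)

lemma enn_powr_ennreal: "0 \<le> x \<Longrightarrow> enn_powr (ennreal x) q = ennreal (x powr q)"
  by (simp add: enn_powr_def)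

lemma ennreal_powr_enn2real_le: "ennreal (enn2real a powr q) \<le> enn_powr a q"
  unfolding enn_powr_def by auto

lemma enn_powr_mono:
  assumes "a \<le> b" "0 \<le> q"
  shows "enn_powr a q \<le> enn_powr b q"
proof (cases "b = top")
  case False
  then have "a \<noteq> top" "enn2real a \<le> enn2real b"
    using assms(1) by (auto simp: top_unique less_top intro: enn2real_mono)
  then show ?thesis
    using False assms(2) by (simp add: enn_powr_def powr_mono2)
qed (simp add: enn_powr_def)

lemma borel_measurable_enn_powr[measurable]:
  assumes [measurable]: "g \<in> borel_measurable M"
  shows "(\<lambda>x. enn_powr (g x) q) \<in> borel_measurable M"
  unfolding enn_powr_def by measurable

lemma weak_Lp_norm_le_of_distribution:
  assumes p: "0 < p" and K: "0 < K"
    and distr: "\<And>t. 0 < t \<Longrightarrow> emeasure M {z \<in> space M. t < \<bar>F z\<bar>} \<le> ennreal (K / t powr p) * I"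
  shows "weak_Lp_norm p M F \<le> ennreal (K powr (1 / p)) * enn_powr I (1 / p)"
proof (cases "I = top")
  case True
  have "0 < K powr (1 / p)"
    using K by simp
  then have "ennreal (K powr (1 / p)) * enn_powr I (1 / p) = top"
    using True by (simp add: enn_powr_def)
  then show ?thesis
    by simp
next
  case False
  then obtain J where J: "I = ennreal J" "0 \<le> J"
    using less_top_ennreal[of I] by (auto simp: top.not_eq_extremum)
  show ?thesis
    unfolding weak_Lp_norm_def
  proof (rule SUP_least)
    fix t :: real assume "t \<in> {0<..}"
    then have t: "0 < t"
      by simp
    have "ennreal t * enn_powr (emeasure M {z \<in> space M. t < \<bar>F z\<bar>}) (1 / p)
        \<le> ennreal t * enn_powr (ennreal (K / t powr p * J)) (1 / p)"
    proof (intro mult_left_mono enn_powr_mono)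
      show "emeasure M {z \<in> space M. t < \<bar>F z\<bar>} \<le> ennreal (K / t powr p * J)"
        using distr[OF t] K J t by (subst ennreal_mult) auto
    qed (use p in auto)
    also have "\<dots> = ennreal (t * (K / t powr p * J) powr (1 / p))"
      using K J t by (simp add: enn_powr_ennreal ennreal_mult)
    also have "t * (K / t powr p * J) powr (1 / p) = K powr (1 / p) * J powr (1 / p)"
      using K J t p by (simp add: powr_mult powr_divide powr_powr)
    also have "ennreal \<dots> = ennreal (K powr (1 / p)) * enn_powr I (1 / p)"
      using J by (simp add: enn_powr_ennreal ennreal_mult)
    finally show "ennreal t * enn_powr (emeasure M {z \<in> space M. t < \<bar>F z\<bar>}) (1 / p)
        \<le> ennreal (K powr (1 / p)) * enn_powr I (1 / p)" .
  qed
qed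

lemma borel_measurable_dist_pair[measurable]:
  "(\<lambda>z::'a::euclidean_space \<times> 'a. dist (fst z) (snd z)) \<in> borel_measurable (lborel \<Otimes>\<^sub>M lborel)"
  unfolding lborel_prod measurable_lborel2
  by (intro borel_measurable_continuous_onI continuous_intros)

lemma sets_pair_dist_less:
  fixes R :: "'a::euclidean_space \<Rightarrow> real"
  assumes [measurable]: "R \<in> borel_measurable lborel"
  shows "{z. dist (fst z) (snd z) < R (fst z)} \<in> sets (lborel \<Otimes>\<^sub>M lborel)"
    and "{z. dist (fst z) (snd z) < R (snd z)} \<in> sets (lborel \<Otimes>\<^sub>M lborel)"
proof -
  have "Measurable.pred (lborel \<Otimes>\<^sub>M lborel) (\<lambda>z::'a \<times> 'a. dist (fst z) (snd z) < R (fst z))"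
    by measurable
  then show "{z. dist (fst z) (snd z) < R (fst z)} \<in> sets (lborel \<Otimes>\<^sub>M lborel)"
    unfolding pred_def by (simp add: space_pair_measure)
  have "Measurable.pred (lborel \<Otimes>\<^sub>M lborel) (\<lambda>z::'a \<times> 'a. dist (fst z) (snd z) < R (snd z))"
    by measurable
  then show "{z. dist (fst z) (snd z) < R (snd z)} \<in> sets (lborel \<Otimes>\<^sub>M lborel)"
    unfolding pred_def by (simp add: space_pair_measure)
qed

lemma emeasure_pair_dist_less:
  fixes R :: "'a::euclidean_space \<Rightarrow> real"
  assumes "R \<in> borel_measurable lborel"
  shows "emeasure (lborel \<Otimes>\<^sub>M lborel) {z. dist (fst z) (snd z) < R (fst z)}
      = (\<integral>\<^sup>+x. emeasure lborel (ball x (R x)) \<partial>lborel)"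
    and "emeasure (lborel \<Otimes>\<^sub>M lborel) {z. dist (fst z) (snd z) < R (snd z)}
      = (\<integral>\<^sup>+x. emeasure lborel (ball x (R x)) \<partial>lborel)"
proof -
  note sets = sets_pair_dist_less[OF assms]
  show "emeasure (lborel \<Otimes>\<^sub>M lborel) {z. dist (fst z) (snd z) < R (fst z)}
      = (\<integral>\<^sup>+x. emeasure lborel (ball x (R x)) \<partial>lborel)"
    using sets(1) by (subst lborel.emeasure_pair_measure_alt) (auto simp: ball_def vimage_def)
  show "emeasure (lborel \<Otimes>\<^sub>M lborel) {z. dist (fst z) (snd z) < R (snd z)}
      = (\<integral>\<^sup>+x. emeasure lborel (ball x (R x)) \<partial>lborel)"
    using sets(2) by (subst lborel_pair.emeasure_pair_measure_alt2)
      (auto simp: ball_def vimage_def dist_commute)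
qed

lemma emeasure_lebesgue_le_pair_measure:
  fixes E :: "('a::euclidean_space \<times> 'b::euclidean_space) set"
  assumes "E \<subseteq> X" "X \<in> sets (lborel \<Otimes>\<^sub>M lborel)"
  shows "emeasure lebesgue E \<le> emeasure (lborel \<Otimes>\<^sub>M lborel) X"
proof -
  have X: "X \<in> sets lborel"
    using assms(2) unfolding lborel_prod .
  then have "emeasure lebesgue E \<le> emeasure lebesgue X"
    using assms(1) by (intro emeasure_mono) (auto intro: sets_completionI_sets)
  also have "\<dots> = emeasure (lborel \<Otimes>\<^sub>M lborel) X"
    unfolding lborel_prod using X by (simp add: emeasure_completion)
  finally show ?thesis .
qed

locale fractional_sharp =
  fixes f :: "'a::euclidean_space \<Rightarrow> real" and s :: real
  assumes locally_integrable: "locally_integrable f" and s_pos: "0 < s"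
begin

definition unit_ball_vol :: real where
  "unit_ball_vol = measure lborel (ball (0::'a) 1)"

lemma unit_ball_vol_pos: "0 < unit_ball_vol"
  unfolding unit_ball_vol_def by (rule content_ball_pos) simp

lemma measure_ball:
  assumes "0 \<le> r"
  shows "measure lebesgue (ball (x::'a) r) = r ^ DIM('a) * unit_ball_vol"
proof -
  have "measure lebesgue (ball x r) = measure lborel (ball x r)"
    by (simp add: measure_completion)
  also have "\<dots> = r ^ DIM('a) * unit_ball_vol"
    unfolding unit_ball_vol_def by (rule content_ball_conv_unit_ball[OF assms])
  finally show ?thesis .
qed

lemma emeasure_lborel_ball:
  assumes "0 \<le> r"
  shows "emeasure lborel (ball (x::'a) r) = ennreal (r ^ DIM('a) * unit_ball_vol)"
  using measure_ball[OF assms, of x] emeasure_lborel_ball_finite[of x r]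
  by (simp add: emeasure_eq_ennreal_measure measure_completion)

lemma measure_ball_pos: "0 < r \<Longrightarrow> 0 < measure lebesgue (ball (x::'a) r)"
  using unit_ball_vol_pos by (simp add: measure_ball)

lemma integrable_cball: "set_integrable lebesgue (cball x r) f"
  using locally_integrable unfolding locally_integrable_def by auto

lemma integrable_ball: "set_integrable lebesgue (ball x r) f"
  by (rule set_integrable_subset[OF integrable_cball[of x r]]) auto

lemma f_measurable[measurable]: "f \<in> borel_measurable lebesgue"
proof (rule borel_measurable_LIMSEQ_real)
  show "(\<lambda>i. indicator (cball 0 (real i)) x *\<^sub>R f x) \<longlonglongrightarrow> f x" for x
  proof (rule tendsto_eventually)
    obtain n :: nat where "norm x \<le> n"
      using real_arch_simple by blast
    then show "\<forall>\<^sub>F i in sequentially. indicator (cball 0 (real i)) x *\<^sub>R f x = f x"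
      unfolding eventually_sequentially by (intro exI[of _ n]) (auto simp: indicator_def)
  qed
  show "(\<lambda>x. indicator (cball 0 (real i)) x *\<^sub>R f x) \<in> borel_measurable lebesgue" for i
    using integrable_cball[of 0 "real i"] unfolding set_integrable_def
    by (rule borel_measurable_integrable)
qed

lemma sets_lebesgue_ball: "ball (x::'a) r \<in> sets lebesgue"
  by simp

lemma integrable_const_ball: "set_integrable lebesgue (ball (x::'a) r) (\<lambda>_. c::real)"
  unfolding set_integrable_def
  using integrable_real_indicator[of "ball x r" lebesgue] emeasure_lborel_ball_finite[of x r]
  by (simp add: emeasure_completion mult.commute)

lemma integrable_abs_diff_ball: "set_integrable lebesgue (ball (x::'a) r) (\<lambda>y. \<bar>f y - c\<bar>)"
  by (intro set_integrable_abs set_integral_diff(1) integrable_ball integrable_const_ball)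

lemma integral_const_ball: "(LINT y:ball (x::'a) r|lebesgue. c) = measure lebesgue (ball x r) * c"
  by (subst set_integral_const) (use emeasure_lborel_ball_finite[of x r] in auto)

lemma ball_avg_diff_le:
  assumes sub: "ball x' r' \<subseteq> ball (x::'a) r" and r': "0 < r'"
  shows "\<bar>ball_avg f x' r' - c\<bar> \<le> (LINT y:ball x r|lebesgue. \<bar>f y - c\<bar>) / measure lebesgue (ball x' r')"
proof -
  let ?m = "measure lebesgue (ball x' r')"
  have m: "0 < ?m"
    using measure_ball_pos[OF r'] .
  have "ball_avg f x' r' - c = (LINT y:ball x' r'|lebesgue. f y - c) / ?m"
    unfolding ball_avg_def using m
    by (simp add: set_integral_diff(2)[OF integrable_ball integrable_const_ball]
        integral_const_ball field_simps)
  also have "\<bar>\<dots>\<bar> \<le> (LINT y:ball x' r'|lebesgue. \<bar>f y - c\<bar>) / ?m"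
    using m set_integral_norm_bound[OF set_integral_diff(1)[OF integrable_ball integrable_const_ball]]
    by (simp add: abs_divide divide_right_mono)
  also have "\<dots> \<le> (LINT y:ball x r|lebesgue. \<bar>f y - c\<bar>) / ?m"
    using m by (intro divide_right_mono set_integral_mono_set[OF sub _ integrable_abs_diff_ball]) auto
  finally show ?thesis .
qed

section \<open>Dyadic mean oscillation\<close>

definition osc :: "'a \<Rightarrow> real \<Rightarrow> real" where
  "osc x r = (LINT y:ball x r|lebesgue. \<bar>f y - ball_avg f x r\<bar>)"

lemma osc_nonneg: "0 \<le> osc x r"
  unfolding osc_def set_lebesgue_integral_def
  by (rule Bochner_Integration.integral_nonneg) (auto simp: indicator_def)

lemma nn_integral_ball_eq_osc:
  "(\<integral>\<^sup>+ y\<in>ball x r. ennreal \<bar>f y - ball_avg f x r\<bar> \<partial>lebesgue) = ennreal (osc x r)"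
proof -
  have "(\<integral>\<^sup>+ y\<in>ball x r. ennreal \<bar>f y - ball_avg f x r\<bar> \<partial>lebesgue)
       = (\<integral>\<^sup>+ y. ennreal (indicator (ball x r) y *\<^sub>R \<bar>f y - ball_avg f x r\<bar>) \<partial>lebesgue)"
    by (intro nn_integral_cong) (auto simp: indicator_def)
  also have "\<dots> = ennreal (osc x r)"
    unfolding osc_def set_lebesgue_integral_def
    using integrable_abs_diff_ball[of x r "ball_avg f x r"] unfolding set_integrable_def
    by (intro nn_integral_eq_integral) (auto simp: indicator_def)
  finally show ?thesis .
qed

(* Only dyadic radii: a countable supremum, hence Borel measurable. *)
definition dyadic_sharp :: "'a \<Rightarrow> ennreal" where
  "dyadic_sharp x =
     (SUP k::int. ennreal (osc x (2 powr k) / (2 powr k) powr (s + real DIM('a))))"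

lemma dyadic_sharp_le_sharp_max: "dyadic_sharp x \<le> sharp_max s f x"
  unfolding dyadic_sharp_def sharp_max_def nn_integral_ball_eq_osc
proof (rule SUP_mono)
  fix k :: int
  show "\<exists>r\<in>{0<..}. ennreal (osc x (2 powr k) / (2 powr k) powr (s + real DIM('a)))
      \<le> ennreal (1 / r powr (s + real DIM('a))) * ennreal (osc x r)"
    by (intro bexI[of _ "2 powr k"]) (auto simp: ennreal_mult'[symmetric] osc_nonneg)
qed

lemma osc_le_dyadic_sharp:
  fixes k :: int
  assumes "dyadic_sharp x \<le> ennreal G" "0 \<le> G"
  shows "osc x (2 powr k) \<le> G * (2 powr k) powr (s + real DIM('a))"
proof -
  have "ennreal (osc x (2 powr k) / (2 powr k) powr (s + real DIM('a))) \<le> dyadic_sharp x"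
    unfolding dyadic_sharp_def by (rule SUP_upper) simp
  then have "osc x (2 powr k) / (2 powr k) powr (s + real DIM('a)) \<le> G"
    using assms ennreal_le_iff order_trans by blast
  then show ?thesis
    by (simp add: divide_le_eq)
qed

section \<open>Convergence of dyadic averages\<close>

definition step_const :: real where
  "step_const = 2 powr real DIM('a) / unit_ball_vol"

lemma dyadic_avg_step:
  fixes k :: int
  assumes "dyadic_sharp x \<le> ennreal G" "0 \<le> G"
  shows "\<bar>ball_avg f x (2 powr (k - 1)) - ball_avg f x (2 powr k)\<bar>
         \<le> step_const * G * (2 powr k) powr s"
proof -
  let ?N = "real DIM('a)"
  have sub: "ball x (2 powr (k - 1)) \<subseteq> ball x (2 powr k)"
    by (intro subset_ball) simp
  have "\<bar>ball_avg f x (2 powr (k - 1)) - ball_avg f x (2 powr k)\<bar>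
        \<le> osc x (2 powr k) / measure lebesgue (ball x (2 powr (k - 1)))"
    unfolding osc_def by (rule ball_avg_diff_le[OF sub]) simp
  also have "\<dots> \<le> G * (2 powr k) powr (s + ?N) / measure lebesgue (ball x (2 powr (k - 1)))"
    by (intro divide_right_mono osc_le_dyadic_sharp assms) simp
  also have "\<dots> = G * 2 powr (k * (s + ?N)) / (2 powr ((k - 1) * ?N) * unit_ball_vol)"
    using measure_ball[of "2 powr (k - 1)" x] by (simp add: powr_power powr_powr mult.commute)
  also have "\<dots> = step_const * G * (2 powr k) powr s"
  proof -
    have "k * (s + ?N) = ?N + k * s + (k - 1) * ?N"
      by (simp add: algebra_simps)
    then have "2 powr (k * (s + ?N)) = 2 powr ?N * (2 powr k) powr s * 2 powr ((k - 1) * ?N)"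
      by (simp add: powr_add powr_powr)
    then show ?thesis
      unfolding step_const_def using unit_ball_vol_pos by (simp add: field_simps)
  qed
  finally show ?thesis .
qed

definition tail_const :: real where
  "tail_const = step_const / (1 - 2 powr (- s))"

lemma two_powr_neg_s_less_1: "2 powr (- s) < 1"
  using s_pos powr_less_mono[of "- s" 0 2] by simp

lemma tail_const_pos: "0 < tail_const"
  unfolding tail_const_def step_const_def using unit_ball_vol_pos two_powr_neg_s_less_1 by simp

lemma dyadic_avg_telescoping:
  fixes K :: int
  assumes "dyadic_sharp x \<le> ennreal G" "0 \<le> G"
  defines "b \<equiv> \<lambda>n. ball_avg f x (2 powr (K - real n))"
  shows "b \<longlonglongrightarrow> b 0 + (\<Sum>n. b (Suc n) - b n)"
    and "\<bar>\<Sum>n. b (Suc n) - b n\<bar> \<le> tail_const * G * (2 powr K) powr s"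
proof -
  have "\<bar>b (Suc n) - b n\<bar> \<le> (step_const * G * (2 powr K) powr s) * (2 powr (- s)) ^ n" for n
  proof -
    have "\<bar>b (Suc n) - b n\<bar> \<le> step_const * G * (2 powr real_of_int (K - int n)) powr s"
      using dyadic_avg_step[OF assms(1,2), of "K - int n"] unfolding b_def
      by (simp add: algebra_simps)
    also have "(2 powr real_of_int (K - int n)) powr s = (2 powr K) powr s * (2 powr (- s)) ^ n"
      by (simp add: powr_power powr_powr powr_add[symmetric] algebra_simps)
    finally show ?thesis
      by (simp add: mult_ac)
  qed
  note telescoping = telescoping_geometric[OF this _ two_powr_neg_s_less_1]
  show "b \<longlonglongrightarrow> b 0 + (\<Sum>n. b (Suc n) - b n)"
    using telescoping(1) by simp
  show "\<bar>\<Sum>n. b (Suc n) - b n\<bar> \<le> tail_const * G * (2 powr K) powr s"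
    using telescoping(2) by (simp add: tail_const_def field_simps)
qed

(* A junk value unless the dyadic averages converge, which they do wherever dyadic_sharp is finite. *)
definition lim_avg :: "'a \<Rightarrow> real" where
  "lim_avg x = lim (\<lambda>n. ball_avg f x (2 powr (- real n)))"

lemma lim_avg_approx:
  fixes K :: int
  assumes "dyadic_sharp x \<le> ennreal G" "0 \<le> G"
  shows "\<bar>lim_avg x - ball_avg f x (2 powr K)\<bar> \<le> tail_const * G * (2 powr K) powr s"
proof -
  define a where "a = (\<lambda>n. ball_avg f x (2 powr (- real n)))"
  define b where "b = (\<lambda>n. ball_avg f x (2 powr (K - real n)))"
  define lb where "lb = b 0 + (\<Sum>n. b (Suc n) - b n)"
  have lb: "b \<longlonglongrightarrow> lb" and lb_close: "\<bar>lb - b 0\<bar> \<le> tail_const * G * (2 powr K) powr s"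
    using dyadic_avg_telescoping[OF assms, of K] unfolding b_def lb_def by simp_all
  have "a \<longlonglongrightarrow> lb"
  proof (cases "0 \<le> K")
    case True
    have "(\<lambda>n. b (n + nat K)) = a"
      unfolding a_def b_def using True by (auto simp: algebra_simps)
    then show ?thesis
      using LIMSEQ_ignore_initial_segment[OF lb, of "nat K"] by simp
  next
    case False
    obtain la where la: "a \<longlonglongrightarrow> la"
      using dyadic_avg_telescoping(1)[OF assms, of 0] unfolding a_def by auto
    have "(\<lambda>n. a (n + nat (- K))) = b"
      unfolding a_def b_def using False by (auto simp: algebra_simps)
    then have "b \<longlonglongrightarrow> la"
      using LIMSEQ_ignore_initial_segment[OF la, of "nat (- K)"] by simp
    then show ?thesis
      using la lb LIMSEQ_unique by metis
  qed
  then have "lim_avg x = lb"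
    unfolding lim_avg_def a_def[symmetric] by (rule limI)
  then show ?thesis
    using lb_close unfolding b_def by simp
qed

lemma ball_avg_shift:
  fixes K :: int
  assumes "dyadic_sharp x \<le> ennreal G" "0 \<le> G" and xy: "dist x y \<le> 2 powr K"
  shows "\<bar>ball_avg f y (2 powr K) - ball_avg f x (2 powr (K + 1))\<bar>
         \<le> G * (2 powr (s + real DIM('a)) / unit_ball_vol) * (2 powr K) powr s"
proof -
  define \<rho> where "\<rho> = 2 powr real_of_int K"
  have \<rho>_pos: "0 < \<rho>"
    unfolding \<rho>_def by simp
  have double: "2 powr real_of_int (K + 1) = 2 * \<rho>"
    unfolding \<rho>_def by (simp add: powr_add)
  have "ball y \<rho> \<subseteq> ball x (2 * \<rho>)"
    using xy unfolding \<rho>_def ball_def by (smt (verit) dist_triangle mem_Collect_eq subsetI)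
  then have "\<bar>ball_avg f y \<rho> - ball_avg f x (2 * \<rho>)\<bar> \<le> osc x (2 * \<rho>) / measure lebesgue (ball y \<rho>)"
    unfolding osc_def by (rule ball_avg_diff_le[OF _ \<rho>_pos])
  also have "\<dots> \<le> G * (2 * \<rho>) powr (s + real DIM('a)) / measure lebesgue (ball y \<rho>)"
    using osc_le_dyadic_sharp[OF assms(1,2), of "K + 1"] unfolding double
    by (intro divide_right_mono) auto
  also have "\<dots> = G * (2 powr (s + real DIM('a)) / unit_ball_vol) * \<rho> powr s"
  proof -
    have "(2 * \<rho>) powr (s + real DIM('a))
        = 2 powr (s + real DIM('a)) * (\<rho> powr s * \<rho> powr real DIM('a))"
      using \<rho>_pos by (simp add: powr_mult powr_add)
    moreover have "measure lebesgue (ball y \<rho>) = \<rho> powr real DIM('a) * unit_ball_vol"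
      using measure_ball[of \<rho> y] \<rho>_pos by (simp add: powr_realpow)
    ultimately show ?thesis
      using unit_ball_vol_pos \<rho>_pos by (simp add: field_simps)
  qed
  finally show ?thesis
    unfolding \<rho>_def double[unfolded \<rho>_def] .
qed

lemma dyadic_scale:
  assumes "0 < d"
  obtains K :: int where "d \<le> 2 powr K" "2 powr K < 2 * d"
proof
  show "d \<le> 2 powr \<lceil>log 2 d\<rceil>"
    using assms powr_mono[of "log 2 d" "\<lceil>log 2 d\<rceil>" 2] by simp
  have "2 powr \<lceil>log 2 d\<rceil> < 2 powr (log 2 d + 1)"
    by (intro powr_less_mono) linarith+
  then show "2 powr \<lceil>log 2 d\<rceil> < 2 * d"
    using assms by (simp add: powr_add)
qed

definition hoelder_const :: real where
  "hoelder_const = (tail_const * 2 powr s + 2 powr (s + real DIM('a)) / unit_ball_vol) * 2 powr s"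

lemma hoelder_const_pos: "0 < hoelder_const"
  unfolding hoelder_const_def using tail_const_pos unit_ball_vol_pos by (simp add: add_pos_pos)

lemma lim_avg_hoelder:
  assumes gx: "dyadic_sharp x \<le> ennreal Gx" "0 \<le> Gx"
    and gy: "dyadic_sharp y \<le> ennreal Gy" "0 \<le> Gy"
    and "x \<noteq> y"
  shows "\<bar>lim_avg x - lim_avg y\<bar> \<le> hoelder_const * (Gx + Gy) * dist x y powr s"
proof -
  have d_pos: "0 < dist x y"
    using \<open>x \<noteq> y\<close> by simp
  then obtain K :: int where K: "dist x y \<le> 2 powr K" "2 powr K < 2 * dist x y"
    by (rule dyadic_scale)
  define \<rho> where "\<rho> = 2 powr real_of_int K"
  define c where "c = tail_const * 2 powr s + 2 powr (s + real DIM('a)) / unit_ball_vol"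
  have c_ge: "tail_const \<le> c"
    unfolding c_def using tail_const_pos unit_ball_vol_pos ge_one_powr_ge_zero[of 2 s] s_pos
    by (smt (verit) divide_nonneg_pos mult_le_cancel_left1 powr_ge_zero)
  have "\<bar>lim_avg x - ball_avg f x (2 powr (K + 1))\<bar> \<le> tail_const * Gx * (2 powr s * \<rho> powr s)"
    using lim_avg_approx[OF gx, of "K + 1"] unfolding \<rho>_def
    by (simp add: powr_add powr_mult mult_ac)
  moreover have "\<bar>ball_avg f y \<rho> - ball_avg f x (2 powr (K + 1))\<bar>
      \<le> Gx * (2 powr (s + real DIM('a)) / unit_ball_vol) * \<rho> powr s"
    using ball_avg_shift[OF gx K(1)] unfolding \<rho>_def .
  moreover have "\<bar>lim_avg y - ball_avg f y \<rho>\<bar> \<le> tail_const * Gy * \<rho> powr s"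
    using lim_avg_approx[OF gy, of K] unfolding \<rho>_def .
  ultimately have "\<bar>lim_avg x - lim_avg y\<bar> \<le> c * Gx * \<rho> powr s + tail_const * Gy * \<rho> powr s"
    unfolding c_def by (simp add: algebra_simps)
  also have "\<dots> \<le> c * (Gx + Gy) * \<rho> powr s"
    using mult_right_mono[OF mult_right_mono[OF c_ge gy(2)], of "\<rho> powr s"]
    by (simp add: algebra_simps)
  also have "\<dots> \<le> c * (Gx + Gy) * (2 powr s * dist x y powr s)"
  proof (rule mult_left_mono)
    show "\<rho> powr s \<le> 2 powr s * dist x y powr s"
      using K(2) s_pos powr_mono2[of s \<rho> "2 * dist x y"] unfolding \<rho>_def
      by (simp add: powr_mult)
    show "0 \<le> c * (Gx + Gy)"
      using c_ge tail_const_pos gx(2) gy(2) by simp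
  qed
  finally show ?thesis
    unfolding hoelder_const_def c_def by (simp add: mult_ac)
qed

section \<open>Lebesgue points\<close>

definition mean_dev_const :: real where
  "mean_dev_const = 1 / unit_ball_vol + tail_const"

lemma mean_dev_lim_avg:
  fixes k :: int
  assumes "dyadic_sharp x \<le> ennreal G" "0 \<le> G"
  shows "(LINT y:ball x (2 powr k)|lebesgue. \<bar>f y - lim_avg x\<bar>)
         \<le> mean_dev_const * G * (2 powr k) powr s * measure lebesgue (ball x (2 powr k))"
proof -
  define \<rho> where "\<rho> = 2 powr real_of_int k"
  define a where "a = ball_avg f x \<rho>"
  have \<rho>_pos: "0 < \<rho>"
    unfolding \<rho>_def by simp
  have "(LINT y:ball x \<rho>|lebesgue. \<bar>f y - lim_avg x\<bar>)
      \<le> (LINT y:ball x \<rho>|lebesgue. \<bar>f y - a\<bar> + \<bar>a - lim_avg x\<bar>)"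
    by (intro set_integral_mono integrable_abs_diff_ball set_integral_add(1) integrable_const_ball)
      auto
  also have "\<dots> = osc x \<rho> + measure lebesgue (ball x \<rho>) * \<bar>a - lim_avg x\<bar>"
    unfolding osc_def a_def
    by (simp add: set_integral_add(2)[OF integrable_abs_diff_ball integrable_const_ball]
        integral_const_ball)
  also have "\<dots> \<le> G * \<rho> powr (s + real DIM('a)) + measure lebesgue (ball x \<rho>) * (tail_const * G * \<rho> powr s)"
  proof (intro add_mono mult_left_mono)
    show "osc x \<rho> \<le> G * \<rho> powr (s + real DIM('a))"
      unfolding \<rho>_def by (rule osc_le_dyadic_sharp[OF assms])
    show "\<bar>a - lim_avg x\<bar> \<le> tail_const * G * \<rho> powr s"
      using lim_avg_approx[OF assms, of k] unfolding a_def \<rho>_def by simp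
  qed simp
  also have "\<dots> = mean_dev_const * G * \<rho> powr s * measure lebesgue (ball x \<rho>)"
    using measure_ball[of \<rho> x] \<rho>_pos unit_ball_vol_pos unfolding mean_dev_const_def
    by (simp add: powr_add powr_realpow field_simps)
  finally show ?thesis
    unfolding \<rho>_def .
qed

lemma measure_deviation_set_le:
  fixes k :: int
  assumes "dyadic_sharp x \<le> ennreal G" "0 \<le> G" "0 < \<epsilon>"
  defines "U \<equiv> {y \<in> ball x (2 powr k). \<epsilon> \<le> \<bar>f y - lim_avg x\<bar>}"
  shows "U \<in> lmeasurable"
    and "measure lebesgue U
         \<le> mean_dev_const * G / \<epsilon> * (2 powr k) powr s * measure lebesgue (ball x (2 powr k))"
proof -
  note sets_lebesgue_ball[measurable]
  have "U \<in> sets lebesgue"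
    unfolding U_def by measurable
  then show "U \<in> lmeasurable"
    by (rule fmeasurableI2[OF lmeasurable_ball[of x "2 powr k"], rotated]) (auto simp: U_def)
  have "measure lebesgue U \<le> (LINT y:ball x (2 powr k)|lebesgue. \<bar>f y - lim_avg x\<bar>) / \<epsilon>"
    unfolding U_def using assms(3)
    by (intro integral_Markov_inequality'_measure integrable_abs_diff_ball) auto
  also have "\<dots> \<le> mean_dev_const * G * (2 powr k) powr s * measure lebesgue (ball x (2 powr k)) / \<epsilon>"
    using assms(3) mean_dev_lim_avg[OF assms(1,2)] by (intro divide_right_mono) auto
  finally show "measure lebesgue U
      \<le> mean_dev_const * G / \<epsilon> * (2 powr k) powr s * measure lebesgue (ball x (2 powr k))"
    by simp
qed

definition bad_set :: "nat \<Rightarrow> nat \<Rightarrow> 'a set" where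
  "bad_set M n = {x. dyadic_sharp x \<le> ennreal (real M) \<and> 1 / (real n + 1) < \<bar>f x - lim_avg x\<bar>}"

lemma bad_set_inter_ball_subset:
  assumes x: "x \<in> bad_set M n"
    and small: "hoelder_const * (2 * real M) * d powr s < 1 / (real n + 1) / 2"
  shows "bad_set M n \<inter> ball x d \<subseteq> {y \<in> ball x d. 1 / (real n + 1) / 2 \<le> \<bar>f y - lim_avg x\<bar>}"
proof
  define \<delta> where "\<delta> = 1 / (real n + 1)"
  fix y assume y: "y \<in> bad_set M n \<inter> ball x d"
  have "\<bar>lim_avg x - lim_avg y\<bar> \<le> \<delta> / 2"
  proof (cases "y = x")
    case False
    have gx: "dyadic_sharp x \<le> ennreal (real M)" and gy: "dyadic_sharp y \<le> ennreal (real M)"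
      using x y unfolding bad_set_def by simp_all
    have "\<bar>lim_avg x - lim_avg y\<bar> \<le> hoelder_const * (real M + real M) * dist x y powr s"
      using lim_avg_hoelder[OF gx _ gy _] False by simp
    also have "\<dots> \<le> hoelder_const * (2 * real M) * d powr s"
    proof -
      have "real M * dist x y powr s \<le> real M * d powr s"
        using y s_pos by (intro mult_left_mono powr_mono2) auto
      then show ?thesis
        using hoelder_const_pos by (simp add: mult_left_mono)
    qed
    finally show ?thesis
      using small unfolding \<delta>_def by simp
  qed (simp add: \<delta>_def)
  moreover have "\<delta> < \<bar>f y - lim_avg y\<bar>"
    using y unfolding bad_set_def \<delta>_def by simp
  ultimately have "\<delta> / 2 \<le> \<bar>f y - lim_avg x\<bar>"
    by linarith
  then show "y \<in> {y \<in> ball x d. 1 / (real n + 1) / 2 \<le> \<bar>f y - lim_avg x\<bar>}"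
    using y unfolding \<delta>_def by auto
qed

(* Near x, lim_avg is almost constant by lim_avg_hoelder, so bad_set M n meets small balls
   around x only where f is far from lim_avg x, a set of small relative measure:
   no point of bad_set M n is a density point. *)
lemma bad_set_negligible: "negligible (bad_set M n)"
proof (subst negligible_eq_zero_density, intro ballI allI impI)
  fix x and r e :: real
  assume x: "x \<in> bad_set M n" and "0 < r" "0 < e"
  define \<epsilon> where "\<epsilon> = 1 / (real n + 1) / 2"
  have \<epsilon>_pos: "0 < \<epsilon>"
    unfolding \<epsilon>_def by simp
  have gx: "dyadic_sharp x \<le> ennreal (real M)"
    using x unfolding bad_set_def by simp
  \<comment> \<open>every bound in the shape C * (2 powr - m) powr s of tendsto_dyadic_powr\<close>
  have "\<forall>\<^sub>F m in sequentially. 1 * (2 powr (- real m)) powr 1 < r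
      \<and> hoelder_const * (2 * real M) * (2 powr (- real m)) powr s < \<epsilon>
      \<and> mean_dev_const * real M / \<epsilon> * (2 powr (- real m)) powr s < e"
    using \<open>0 < r\<close> \<open>0 < e\<close> \<epsilon>_pos s_pos
    by (intro eventually_conj order_tendstoD(2)[OF tendsto_dyadic_powr]) auto
  then obtain m where m: "2 powr (- real m) < r"
    "hoelder_const * (2 * real M) * (2 powr (- real m)) powr s < \<epsilon>"
    "mean_dev_const * real M / \<epsilon> * (2 powr (- real m)) powr s < e"
    by (auto simp: eventually_sequentially)
  define d where "d = 2 powr real_of_int (- int m)"
  define U where "U = {y \<in> ball x d. \<epsilon> \<le> \<bar>f y - lim_avg x\<bar>}"
  have d_pos: "0 < d"
    unfolding d_def by simp
  have "d = 2 powr (- real m)"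
    unfolding d_def by simp
  note m = m[folded this]
  have "bad_set M n \<inter> ball x d \<subseteq> U"
    using bad_set_inter_ball_subset[OF x m(2)[unfolded \<epsilon>_def]] unfolding U_def \<epsilon>_def .
  moreover note U_bounds = measure_deviation_set_le[OF gx of_nat_0_le_iff \<epsilon>_pos, of "- int m",
      folded d_def, folded U_def]
  moreover have "measure lebesgue U < e * measure lebesgue (ball x d)"
    using U_bounds(2) mult_strict_right_mono[OF m(3) measure_ball_pos[OF d_pos, of x]]
    by linarith
  ultimately show "\<exists>d>0. d \<le> r \<and> (\<exists>U. bad_set M n \<inter> ball x d \<subseteq> U \<and> U \<in> lmeasurable
      \<and> measure lebesgue U < e * measure lebesgue (ball x d))"
    using m(1) d_pos by (intro exI[of _ d] conjI exI[of _ U]) auto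
qed

lemma lim_avg_ae: "negligible {x. dyadic_sharp x < top \<and> f x \<noteq> lim_avg x}"
proof (rule negligible_subset[OF negligible_countable_Union[of "range (\<lambda>(M, n). bad_set M n)"]])
  show "{x. dyadic_sharp x < top \<and> f x \<noteq> lim_avg x} \<subseteq> \<Union> (range (\<lambda>(M, n). bad_set M n))"
  proof
    fix x assume x: "x \<in> {x. dyadic_sharp x < top \<and> f x \<noteq> lim_avg x}"
    then obtain G where "dyadic_sharp x = ennreal G"
      using less_top_ennreal by auto
    moreover obtain M :: nat where "G \<le> real M"
      using real_arch_simple by blast
    ultimately have "dyadic_sharp x \<le> ennreal (real M)"
      by simp
    moreover obtain n where "inverse (real (Suc n)) < \<bar>f x - lim_avg x\<bar>"
      using x reals_Archimedean[of "\<bar>f x - lim_avg x\<bar>"] by auto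
    ultimately have "x \<in> bad_set M n"
      unfolding bad_set_def by (simp add: inverse_eq_divide add.commute)
    then show "x \<in> \<Union> (range (\<lambda>(M, n). bad_set M n))"
      by blast
  qed
qed (auto intro: bad_set_negligible)

section \<open>Measurability\<close>

(* f is only Lebesgue measurable; measurability of x \<mapsto> osc x r on lborel, needed for the
   product measure lborel \<Otimes>\<^sub>M lborel, goes through a Borel representative. *)
definition f_borel :: "'a \<Rightarrow> real" where
  "f_borel = (SOME g. g \<in> borel_measurable lborel \<and> (AE x in lborel. f x = g x))"

lemma f_borel: "f_borel \<in> borel_measurable lborel" "AE x in lebesgue. f x = f_borel x"
proof -
  have "\<exists>g. g \<in> borel_measurable lborel \<and> (AE x in lborel. f x = g x)"
    using completion_ex_borel_measurable_real[OF f_measurable] by blast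
  then have "f_borel \<in> borel_measurable lborel \<and> (AE x in lborel. f x = f_borel x)"
    unfolding f_borel_def by (rule someI_ex)
  then show "f_borel \<in> borel_measurable lborel" "AE x in lebesgue. f x = f_borel x"
    by (auto intro: AE_completion)
qed

lemma f_borel_measurable[measurable]: "f_borel \<in> borel_measurable lborel"
  by (rule f_borel(1))

lemma sets_lborel_ball[measurable]: "ball (x::'a) r \<in> sets lborel"
  by simp

lemma f_borel_lebesgue_measurable: "f_borel \<in> borel_measurable lebesgue"
  by (rule measurable_completion[OF f_borel(1)])

lemma borel_measurable_indicator_ball[measurable]:
  "(\<lambda>z::'a \<times> 'a. indicator (ball (fst z) r) (snd z) :: real) \<in> borel_measurable (lborel \<Otimes>\<^sub>M lborel)"
proof -
  have "(\<lambda>z::'a \<times> 'a. indicator (ball (fst z) r) (snd z) :: real) = indicator {z. dist (fst z) (snd z) < r}"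
    by (auto simp: indicator_def)
  also have "\<dots> \<in> borel_measurable (lborel \<Otimes>\<^sub>M lborel)"
    by measurable
  finally show ?thesis .
qed

lemma ball_avg_eq_lborel:
  "ball_avg f x r = (\<integral>y. indicator (ball x r) y * f_borel y \<partial>lborel) / measure lebesgue (ball (0::'a) r)"
proof -
  have "(LINT y:ball x r|lebesgue. f y) = (\<integral>y. indicator (ball x r) y * f_borel y \<partial>lebesgue)"
  proof -
    note f_borel_lebesgue_measurable[measurable] sets_lebesgue_ball[measurable]
    show ?thesis
      unfolding set_lebesgue_integral_def using f_borel(2)
      by (intro integral_cong_AE) (measurable, auto)
  qed
  also have "\<dots> = (\<integral>y. indicator (ball x r) y * f_borel y \<partial>lborel)"
    by (rule integral_completion) measurable
  moreover have "measure lebesgue (ball x r) = measure lebesgue (ball (0::'a) r)"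
    using measure_ball[of r x] measure_ball[of r 0] by (cases "0 \<le> r") (auto simp: ball_empty)
  ultimately show ?thesis
    unfolding ball_avg_def by simp
qed

lemma ball_avg_measurable[measurable]: "(\<lambda>x. ball_avg f x r) \<in> borel_measurable lborel"
  unfolding ball_avg_eq_lborel by measurable

lemma osc_eq_lborel: "osc x r = (\<integral>y. indicator (ball x r) y * \<bar>f_borel y - ball_avg f x r\<bar> \<partial>lborel)"
proof -
  have "osc x r = (\<integral>y. indicator (ball x r) y * \<bar>f_borel y - ball_avg f x r\<bar> \<partial>lebesgue)"
  proof -
    note f_borel_lebesgue_measurable[measurable] sets_lebesgue_ball[measurable]
    show ?thesis
      unfolding osc_def set_lebesgue_integral_def using f_borel(2)
      by (intro integral_cong_AE) (measurable, auto)
  qed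
  also have "\<dots> = (\<integral>y. indicator (ball x r) y * \<bar>f_borel y - ball_avg f x r\<bar> \<partial>lborel)"
    by (rule integral_completion) measurable
  finally show ?thesis .
qed

lemma osc_measurable[measurable]: "(\<lambda>x. osc x r) \<in> borel_measurable lborel"
  unfolding osc_eq_lborel by measurable

lemma dyadic_sharp_measurable[measurable]: "dyadic_sharp \<in> borel_measurable lborel"
  unfolding dyadic_sharp_def by measurable

section \<open>The weak-type estimate\<close>

lemma exceptional_null_set:
  assumes "(\<integral>\<^sup>+x. enn_powr (dyadic_sharp x) p \<partial>lborel) \<noteq> top"
  shows "\<exists>Z \<in> null_sets lborel. \<forall>x. x \<notin> Z \<longrightarrow> dyadic_sharp x < top \<and> f x = lim_avg x"
proof -
  have "(\<integral>\<^sup>+x. enn_powr (dyadic_sharp x) p \<partial>lborel) \<noteq> \<infinity>"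
    using assms by simp
  then have "AE x in lborel. enn_powr (dyadic_sharp x) p \<noteq> \<infinity>"
    by (intro nn_integral_PInf_AE) measurable
  then have "{x \<in> space lborel. \<not> enn_powr (dyadic_sharp x) p \<noteq> \<infinity>} \<in> null_sets lborel"
    by (subst AE_iff_null[symmetric]) measurable
  moreover have "{x \<in> space lborel. \<not> enn_powr (dyadic_sharp x) p \<noteq> \<infinity>} = {x. dyadic_sharp x = top}"
    unfolding enn_powr_def by auto
  ultimately have "{x. dyadic_sharp x = top} \<in> null_sets lborel"
    by simp
  moreover obtain N where "N \<in> null_sets lborel" "{x. dyadic_sharp x < top \<and> f x \<noteq> lim_avg x} \<subseteq> N"
    using lim_avg_ae unfolding negligible_iff_null_sets null_sets_completion_iff2 by blast
  ultimately show ?thesis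
    by (intro bexI[of _ "{x. dyadic_sharp x = top} \<union> N"]) (auto simp: top.not_eq_extremum)
qed

(* The solution d of t * d powr (N / p) = 2 * hoelder_const * dyadic_sharp x. *)
definition level_radius :: "real \<Rightarrow> real \<Rightarrow> 'a \<Rightarrow> real" where
  "level_radius p t x = (2 * hoelder_const * enn2real (dyadic_sharp x) / t) powr (p / real DIM('a))"

lemma level_radius_measurable[measurable]: "level_radius p t \<in> borel_measurable lborel"
  unfolding level_radius_def by measurable

lemma dist_less_level_radius:
  assumes "0 < p" "0 < t" "0 < d"
    and "t * d powr (real DIM('a) / p) < 2 * hoelder_const * enn2real (dyadic_sharp z)"
  shows "d < level_radius p t z"
proof -
  have "d powr (real DIM('a) / p) < 2 * hoelder_const * enn2real (dyadic_sharp z) / t"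
    using assms(2,4) by (simp add: field_simps)
  then have "(d powr (real DIM('a) / p)) powr (p / real DIM('a)) < level_radius p t z"
    unfolding level_radius_def using assms(1) by (intro powr_less_mono2) auto
  then show ?thesis
    using assms(1,3) by (simp add: powr_powr)
qed

lemma large_quotient_imp_near:
  assumes "0 < p" "0 < t"
    and x: "dyadic_sharp x < top" "f x = lim_avg x" and y: "dyadic_sharp y < top" "f y = lim_avg y"
    and large: "t < \<bar>f x - f y\<bar> / norm (x - y) powr (real DIM('a) / p + s)"
  shows "dist x y < level_radius p t x \<or> dist x y < level_radius p t y"
proof -
  define d where "d = dist x y"
  define Gx where "Gx = enn2real (dyadic_sharp x)"
  define Gy where "Gy = enn2real (dyadic_sharp y)"
  have gx: "dyadic_sharp x \<le> ennreal Gx" "0 \<le> Gx" and gy: "dyadic_sharp y \<le> ennreal Gy" "0 \<le> Gy"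
    using x(1) y(1) unfolding Gx_def Gy_def by (auto simp: less_top[symmetric] ennreal_enn2real)
  have "x \<noteq> y"
    using large \<open>0 < t\<close> by auto
  then have d_pos: "0 < d"
    unfolding d_def by simp
  have "t * d powr (real DIM('a) / p) * d powr s < \<bar>f x - f y\<bar>"
    using large d_pos by (simp add: d_def dist_norm powr_add pos_less_divide_eq mult.assoc)
  also have "\<dots> \<le> hoelder_const * (Gx + Gy) * d powr s"
    using lim_avg_hoelder[OF gx gy \<open>x \<noteq> y\<close>] x(2) y(2) unfolding d_def by simp
  finally have "t * d powr (real DIM('a) / p) < hoelder_const * (Gx + Gy)"
    using d_pos by (simp add: mult_less_cancel_right)
  moreover have "hoelder_const * (Gx + Gy) \<le> 2 * hoelder_const * max Gx Gy"
    using hoelder_const_pos by (simp add: mult_left_mono)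
  ultimately have "t * d powr (real DIM('a) / p) < 2 * hoelder_const * Gx
      \<or> t * d powr (real DIM('a) / p) < 2 * hoelder_const * Gy"
    by (simp add: max_def split: if_splits)
  then show ?thesis
    using dist_less_level_radius[OF \<open>0 < p\<close> \<open>0 < t\<close> d_pos] unfolding Gx_def Gy_def d_def
    by blast
qed

lemma nn_integral_ball_level_radius:
  assumes "0 < p" "0 < t"
  shows "(\<integral>\<^sup>+x. emeasure lborel (ball x (level_radius p t x)) \<partial>lborel)
    \<le> ennreal (unit_ball_vol * (2 * hoelder_const) powr p / t powr p)
        * (\<integral>\<^sup>+x. enn_powr (dyadic_sharp x) p \<partial>lborel)"
proof -
  have "emeasure lborel (ball x (level_radius p t x))
      \<le> ennreal (unit_ball_vol * (2 * hoelder_const) powr p / t powr p) * enn_powr (dyadic_sharp x) p"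
    for x
  proof -
    define G where "G = enn2real (dyadic_sharp x)"
    have G: "0 \<le> G"
      unfolding G_def by simp
    have "emeasure lborel (ball x (level_radius p t x)) = ennreal (level_radius p t x ^ DIM('a) * unit_ball_vol)"
      unfolding level_radius_def by (simp add: emeasure_lborel_ball)
    also have "level_radius p t x ^ DIM('a) = (2 * hoelder_const / t) powr p * G powr p"
    proof -
      have "(2 * hoelder_const * G / t) powr p = (2 * hoelder_const / t) powr p * G powr p"
        using hoelder_const_pos G assms powr_mult[of "2 * hoelder_const / t" G p] by simp
      then show ?thesis
        unfolding level_radius_def G_def[symmetric] using hoelder_const_pos G assms
        by (simp add: powr_divide_power_cancel)
    qed
    also have "ennreal ((2 * hoelder_const / t) powr p * G powr p * unit_ball_vol)
        = ennreal (unit_ball_vol * (2 * hoelder_const) powr p / t powr p) * ennreal (G powr p)"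
      using unit_ball_vol_pos hoelder_const_pos assms
      by (simp add: ennreal_mult[symmetric] powr_divide mult_ac)
    also have "\<dots> \<le> ennreal (unit_ball_vol * (2 * hoelder_const) powr p / t powr p) * enn_powr (dyadic_sharp x) p"
      unfolding G_def by (intro mult_left_mono ennreal_powr_enn2real_le) auto
    finally show ?thesis .
  qed
  then have "(\<integral>\<^sup>+x. emeasure lborel (ball x (level_radius p t x)) \<partial>lborel)
      \<le> (\<integral>\<^sup>+x. ennreal (unit_ball_vol * (2 * hoelder_const) powr p / t powr p) * enn_powr (dyadic_sharp x) p \<partial>lborel)"
    by (intro nn_integral_mono)
  also have "\<dots> = ennreal (unit_ball_vol * (2 * hoelder_const) powr p / t powr p)
      * (\<integral>\<^sup>+x. enn_powr (dyadic_sharp x) p \<partial>lborel)"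
    by (rule nn_integral_cmult) measurable
  finally show ?thesis .
qed

lemma diff_quotient_level_set_subset:
  assumes "0 < p" "0 < t" and good: "\<And>x. x \<notin> Z \<Longrightarrow> dyadic_sharp x < top \<and> f x = lim_avg x"
  shows "{z \<in> space lebesgue. t < \<bar>(\<lambda>(x, y). (f x - f y) / norm (x - y) powr (real DIM('a) / p + s)) z\<bar>}
    \<subseteq> (Z \<times> UNIV \<union> UNIV \<times> Z) \<union> {z. dist (fst z) (snd z) < level_radius p t (fst z)}
       \<union> {z. dist (fst z) (snd z) < level_radius p t (snd z)}"
proof
  fix z
  assume z: "z \<in> {z \<in> space lebesgue. t < \<bar>(\<lambda>(x, y). (f x - f y) / norm (x - y) powr (real DIM('a) / p + s)) z\<bar>}"
  obtain x y where xy: "z = (x, y)"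
    by (cases z)
  have large: "t < \<bar>f x - f y\<bar> / norm (x - y) powr (real DIM('a) / p + s)"
    using z unfolding xy by (simp add: abs_divide)
  show "z \<in> (Z \<times> UNIV \<union> UNIV \<times> Z) \<union> {z. dist (fst z) (snd z) < level_radius p t (fst z)}
       \<union> {z. dist (fst z) (snd z) < level_radius p t (snd z)}"
  proof (cases "x \<in> Z \<or> y \<in> Z")
    case False
    then show ?thesis
      using large_quotient_imp_near[OF assms(1,2) _ _ _ _ large] good unfolding xy by auto
  qed (auto simp: xy)
qed

lemma distribution_diff_quotient_le:
  assumes "0 < p" "0 < t"
  shows "emeasure lebesgue {z \<in> space lebesgue.
            t < \<bar>(\<lambda>(x, y). (f x - f y) / norm (x - y) powr (real DIM('a) / p + s)) z\<bar>}
    \<le> ennreal (2 * (unit_ball_vol * (2 * hoelder_const) powr p / t powr p))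
        * (\<integral>\<^sup>+x. enn_powr (dyadic_sharp x) p \<partial>lborel)"
    (is "emeasure lebesgue ?E \<le> ennreal (2 * ?K) * ?I")
proof (cases "?I = top")
  case True
  have "ennreal (2 * ?K) \<noteq> 0"
    using unit_ball_vol_pos hoelder_const_pos assms by simp
  then have "ennreal (2 * ?K) * ?I = top"
    using True by simp
  then show ?thesis
    by simp
next
  case False
  obtain Z where Z: "Z \<in> null_sets lborel"
    and good: "\<And>x. x \<notin> Z \<Longrightarrow> dyadic_sharp x < top \<and> f x = lim_avg x"
    using exceptional_null_set[OF False] by blast
  define A1 where "A1 = {z::'a \<times> 'a. dist (fst z) (snd z) < level_radius p t (fst z)}"
  define A2 where "A2 = {z::'a \<times> 'a. dist (fst z) (snd z) < level_radius p t (snd z)}"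
  define N where "N = Z \<times> UNIV \<union> UNIV \<times> Z"
  have N: "N \<in> null_sets (lborel \<Otimes>\<^sub>M lborel)"
    unfolding N_def using Z
    by (intro null_sets.Un lborel.times_in_null_sets1 lborel.times_in_null_sets2) auto
  have A: "A1 \<in> sets (lborel \<Otimes>\<^sub>M lborel)" "A2 \<in> sets (lborel \<Otimes>\<^sub>M lborel)"
    unfolding A1_def A2_def using sets_pair_dist_less[OF level_radius_measurable] by auto
  have "?E \<subseteq> N \<union> A1 \<union> A2"
    unfolding N_def A1_def A2_def using diff_quotient_level_set_subset[OF assms] good .
  then have "emeasure lebesgue ?E \<le> emeasure (lborel \<Otimes>\<^sub>M lborel) (N \<union> A1 \<union> A2)"
    using N A by (intro emeasure_lebesgue_le_pair_measure) auto
  also have "\<dots> \<le> emeasure (lborel \<Otimes>\<^sub>M lborel) N + emeasure (lborel \<Otimes>\<^sub>M lborel) A1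
      + emeasure (lborel \<Otimes>\<^sub>M lborel) A2"
    using N A by (intro order_trans[OF emeasure_subadditive] add_right_mono emeasure_subadditive) auto
  also have "\<dots> = (\<integral>\<^sup>+x. emeasure lborel (ball x (level_radius p t x)) \<partial>lborel)
      + (\<integral>\<^sup>+x. emeasure lborel (ball x (level_radius p t x)) \<partial>lborel)"
    using N unfolding A1_def A2_def
    by (simp add: emeasure_pair_dist_less[OF level_radius_measurable] null_setsD1)
  also have "\<dots> \<le> ennreal ?K * ?I + ennreal ?K * ?I"
    using nn_integral_ball_level_radius[OF assms] by (intro add_mono) (simp_all add: mult.assoc)
  also have "\<dots> = ennreal (2 * ?K) * ?I"
  proof -
    have "ennreal (2 * ?K) = ennreal 2 * ennreal ?K"
      using unit_ball_vol_pos hoelder_const_pos by (intro ennreal_mult) auto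
    then show ?thesis
      by (simp only: ennreal_numeral mult_2 distrib_right)
  qed
  finally show ?thesis
    by (simp add: mult.assoc)
qed

lemma weak_Lp_diff_quotient_le:
  assumes "0 < p"
  shows "weak_Lp_norm p lebesgue (\<lambda>(x, y). (f x - f y) / norm (x - y) powr (real DIM('a) / p + s))
    \<le> ennreal ((2 * unit_ball_vol * (2 * hoelder_const) powr p) powr (1 / p))
        * Lp_norm p lebesgue (sharp_max s f)"
proof -
  let ?I = "\<integral>\<^sup>+x. enn_powr (dyadic_sharp x) p \<partial>lborel"
  have "weak_Lp_norm p lebesgue (\<lambda>(x, y). (f x - f y) / norm (x - y) powr (real DIM('a) / p + s))
      \<le> ennreal ((2 * unit_ball_vol * (2 * hoelder_const) powr p) powr (1 / p)) * enn_powr ?I (1 / p)"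
    using assms unit_ball_vol_pos hoelder_const_pos distribution_diff_quotient_le[OF assms]
    by (intro weak_Lp_norm_le_of_distribution) (auto simp: mult.assoc)
  also have "enn_powr ?I (1 / p) = Lp_norm p lebesgue dyadic_sharp"
    unfolding Lp_norm_def nn_integral_completion ..
  also have "\<dots> \<le> Lp_norm p lebesgue (sharp_max s f)"
    unfolding Lp_norm_def using assms
    by (intro enn_powr_mono nn_integral_mono dyadic_sharp_le_sharp_max) auto
  finally show ?thesis
    by (simp add: mult_left_mono)
qed

end

theorem mainTheorem7:
  fixes p s :: real
  assumes "1 < p" and "0 < s" and "s \<le> 1"
  shows "\<exists>C::real. \<forall>f :: 'a::euclidean_space \<Rightarrow> real. locally_integrable f \<longrightarrow>
    weak_Lp_norm p (lebesgue :: ('a \<times> 'a) measure)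
      (\<lambda>(x, y). (f x - f y) / norm (x - y) powr (real DIM('a) / p + s))
    \<le> ennreal C * Lp_norm p lebesgue (sharp_max s f)"
proof (intro exI[of _ "(2 * fractional_sharp.unit_ball_vol TYPE('a)
    * (2 * fractional_sharp.hoelder_const TYPE('a) s) powr p) powr (1 / p)"] allI impI)
  fix f :: "'a \<Rightarrow> real"
  assume "locally_integrable f"
  then interpret fractional_sharp f s
    using \<open>0 < s\<close> by unfold_locales
  show "weak_Lp_norm p (lebesgue :: ('a \<times> 'a) measure)
      (\<lambda>(x, y). (f x - f y) / norm (x - y) powr (real DIM('a) / p + s))
    \<le> ennreal ((2 * unit_ball_vol * (2 * hoelder_const) powr p) powr (1 / p))
      * Lp_norm p lebesgue (sharp_max s f)"
    using weak_Lp_diff_quotient_le \<open>1 < p\<close> by simp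
qed

end
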